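(* Let $\mathcal M$ be a structural causal model with binary $X$ (values $x,x'$), binary $Y$ (values $y,y'$), discrete sets of variables $C$ and $Z$, where $C$ contains no descendant of $X$, and such that for all $x\ne x'$ in the range of $X$, $Y_x$ is independent of $(X,Z_{x'})$ conditionally on $(Z_x,C)$. Fix $c$ with $P(c)>0$. Then $$\max\{0,\ P(y_x\mid c)-P(y_{x'}\mid c),\ P(y\mid c)-P(y_{x'}\mid c),\ P(y_x\mid c)-P(y\mid c)\}\le P(y_x,y'_{x'}\mid c)$$ and $$P(y_x,y'_{x'}\mid c)\le\min\Big\{P(y_x\mid c),\ P(y'_{x'}\mid c),\ P(y,x\mid c)+P(y',x'\mid c),\ P(y_x\mid c)-P(y_{x'}\mid c)+P(y,x'\mid c)+P(y',x\mid c),$$ $$\qquad\sum_z\sum_{z'}\min\{P(y\mid z,x,c),P(y'\mid z',x',c)\}\cdot\min\{P(z_x\mid c),P(z'_{x'}\mid c)\}\Big\},$$ where $z,z'$ range over values of $Z$ (with the conditional probabilities defined).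
   Context: For a value $x$ of $X$, $Y_x$ and $Z_x$ denote the counterfactual variables "the value $Y$ (resp. $Z$) would take had $X$ been set to $x$"; $y_x$ is the event $Y_x=y$, $z_x$ the event $Z_x=z$, $z'_{x'}$ the event $Z_{x'}=z'$. Unsubscripted probabilities are observational. Consistency: $X=x$ implies $Y_x=Y$ and $Z_x=Z$. *)

theory Defs
  imports "HOL-Probability.Probability"
begin

text \<open>Discrete probability space of units: a pmf M over a type 'u. All variables
  (observational and counterfactual) are random variables on it.\<close>

definition Pr :: "'u pmf \<Rightarrow> ('u \<Rightarrow> bool) \<Rightarrow> real" where
  "Pr M A = measure_pmf.prob M {\<omega>. A \<omega>}"

definition cPr :: "'u pmf \<Rightarrow> ('u \<Rightarrow> bool) \<Rightarrow> ('u \<Rightarrow> bool) \<Rightarrow> real" where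
  "cPr M A B = Pr M (\<lambda>\<omega>. A \<omega> \<and> B \<omega>) / Pr M B"

definition cond_indep ::
  "'u pmf \<Rightarrow> ('u \<Rightarrow> 'a) \<Rightarrow> ('u \<Rightarrow> 'b) \<Rightarrow> ('u \<Rightarrow> 'w) \<Rightarrow> bool" where
  "cond_indep M A B W \<longleftrightarrow>
     (\<forall>a b w. Pr M (\<lambda>\<omega>. A \<omega> = a \<and> B \<omega> = b \<and> W \<omega> = w) * Pr M (\<lambda>\<omega>. W \<omega> = w)
            = Pr M (\<lambda>\<omega>. A \<omega> = a \<and> W \<omega> = w) * Pr M (\<lambda>\<omega>. B \<omega> = b \<and> W \<omega> = w))"

end

theory Submission
  imports Defs
begin

text \<open>Conditioning on C = c is the same as passing to the conditional distribution
  cond_pmf M {C = c}, so C can be dropped. The first two groups of bounds are then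
  inclusion-exclusion inequalities for the joint law of (X, Y_x, Y_x'), using Y = Y_X. For the
  last bound, partition the event (y_x, y'_x') by the value (z, z') of (Z_x, Z_x'). The
  independence of Y_a from (X, Z_b) given Z_a factorises P(y_a, Z_a = z, Z_b = z') as
  P(y | z, a) P(Z_a = z, Z_b = z') for both a = x and a = x', so each cell has probability at most
  min(P(y | z, x), P(y' | z', x')) min(P(z_x), P(z'_x')).\<close>

lemma Pr_cong: "(\<And>\<omega>. P \<omega> \<longleftrightarrow> Q \<omega>) \<Longrightarrow> Pr M P = Pr M Q"
  unfolding Pr_def by (rule arg_cong[where f = "measure_pmf.prob M"]) auto

lemma Pr_nonneg: "0 \<le> Pr M P"
  unfolding Pr_def by simp

lemma Pr_eq_0: "(\<And>\<omega>. \<not> P \<omega>) \<Longrightarrow> Pr M P = 0"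
  using Pr_cong[of P "\<lambda>_. False" M] unfolding Pr_def by simp

lemma Pr_mono: "(\<And>\<omega>. P \<omega> \<Longrightarrow> Q \<omega>) \<Longrightarrow> Pr M P \<le> Pr M Q"
  unfolding Pr_def by (rule measure_pmf.finite_measure_mono) auto

lemma Pr_null_mono: "Pr M Q = 0 \<Longrightarrow> (\<And>\<omega>. P \<omega> \<Longrightarrow> Q \<omega>) \<Longrightarrow> Pr M P = 0"
  by (metis Pr_mono Pr_nonneg antisym)

lemma Pr_subadditive:
  assumes "\<And>\<omega>. P \<omega> \<Longrightarrow> Q \<omega> \<or> R \<omega>"
  shows "Pr M P \<le> Pr M Q + Pr M R"
proof -
  have "Pr M P \<le> measure_pmf.prob M ({\<omega>. Q \<omega>} \<union> {\<omega>. R \<omega>})"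
    unfolding Pr_def by (rule measure_pmf.finite_measure_mono) (use assms in auto)
  also have "\<dots> \<le> Pr M Q + Pr M R"
    unfolding Pr_def by (rule measure_Un_le) auto
  finally show ?thesis .
qed

lemma Pr_split: "Pr M P = Pr M (\<lambda>\<omega>. P \<omega> \<and> Q \<omega>) + Pr M (\<lambda>\<omega>. P \<omega> \<and> \<not> Q \<omega>)"
proof -
  have "{\<omega>. P \<omega>} = {\<omega>. P \<omega> \<and> Q \<omega>} \<union> {\<omega>. P \<omega> \<and> \<not> Q \<omega>}" by auto
  then show ?thesis
    unfolding Pr_def by (simp add: measure_pmf.finite_measure_Union disjoint_iff)
qed

lemma cPr_nonneg: "0 \<le> cPr M P Q"
  unfolding cPr_def by (simp add: Pr_nonneg)

lemma Pr_has_sum_partition: "((\<lambda>b. Pr M (\<lambda>\<omega>. P \<omega> \<and> f \<omega> = b)) has_sum Pr M P) UNIV"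
proof -
  define N where "N = map_pmf (\<lambda>\<omega>. (P \<omega>, f \<omega>)) M"
  have "Pr M P = measure N (range (Pair True))"
    unfolding N_def Pr_def by (simp add: vimage_def image_def)
  also have "\<dots> = infsum (pmf N) (range (Pair True))"
    by (simp add: measure_pmf_conv_infsetsum) (rule infsetsum_infsum, simp add: pmf_abs_summable)
  finally have "(pmf N has_sum Pr M P) (range (Pair True))"
    by (metis summable_iff_has_sum_infsum abs_summable_summable abs_summable_equivalent pmf_abs_summable)
  then have "((pmf N \<circ> Pair True) has_sum Pr M P) UNIV"
    by (simp add: has_sum_reindex inj_on_def)
  moreover have "pmf N \<circ> Pair True = (\<lambda>b. Pr M (\<lambda>\<omega>. P \<omega> \<and> f \<omega> = b))"
    unfolding N_def Pr_def
    by (auto simp: pmf_map vimage_def intro!: arg_cong[where f = "measure_pmf.prob M"])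
  ultimately show ?thesis by simp
qed

lemma Pr_scale_by_partition:
  assumes "\<And>b. Pr M (\<lambda>\<omega>. P \<omega> \<and> f \<omega> = b) = k * Pr M (\<lambda>\<omega>. Q \<omega> \<and> f \<omega> = b)"
  shows "Pr M P = k * Pr M Q"
  using Pr_has_sum_partition[of M P f] has_sum_cmult_right[OF Pr_has_sum_partition[of M Q f], of k]
  by (simp add: assms has_sum_unique)

lemma ennreal_Pr_eq_infsum_partition:
  "ennreal (Pr M P) = (\<Sum>\<^sub>\<infinity>b. ennreal (Pr M (\<lambda>\<omega>. P \<omega> \<and> f \<omega> = b)))"
proof -
  have "((ennreal \<circ> (\<lambda>b. Pr M (\<lambda>\<omega>. P \<omega> \<and> f \<omega> = b))) has_sum ennreal (Pr M P)) UNIV"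
    by (rule has_sum_comm_additive_general[OF _ _ Pr_has_sum_partition])
       (auto simp: sum_ennreal Pr_nonneg intro: tendsto_ennrealI tendsto_ident_at)
  then show ?thesis
    by (simp add: infsumI o_def)
qed

lemma Pr_cond_pmf:
  assumes "Pr M B > 0"
  shows "Pr (cond_pmf M {\<omega>. B \<omega>}) A = cPr M A B"
proof -
  have ne: "set_pmf M \<inter> {\<omega>. B \<omega>} \<noteq> {}"
    using assms measure_pmf_zero_iff[of M "{\<omega>. B \<omega>}"] unfolding Pr_def by auto
  have "Pr (cond_pmf M {\<omega>. B \<omega>}) A = measure (uniform_measure M {\<omega>. B \<omega>}) {\<omega>. A \<omega>}"
    unfolding Pr_def cond_pmf.rep_eq[OF ne] ..
  also have "\<dots> = measure M ({\<omega>. B \<omega>} \<inter> {\<omega>. A \<omega>}) / measure M {\<omega>. B \<omega>}"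
    by (rule measure_uniform_measure)
      (simp_all add: emeasure_measure_pmf_not_zero[OF ne] measure_pmf.emeasure_finite)
  also have "\<dots> = cPr M A B"
    unfolding cPr_def Pr_def by (simp add: Int_def conj_commute)
  finally show ?thesis .
qed

lemma cPr_cond_pmf:
  assumes "Pr M (\<lambda>\<omega>. C \<omega> = c) > 0"
  shows "cPr (cond_pmf M {\<omega>. C \<omega> = c}) A B = cPr M A (\<lambda>\<omega>. B \<omega> \<and> C \<omega> = c)"
  using assms by (simp add: cPr_def Pr_cond_pmf conj_assoc)

lemma cond_indep_iff_factor:
  "cond_indep M A B W \<longleftrightarrow>
     (\<forall>a b w. Pr M (\<lambda>\<omega>. A \<omega> = a \<and> B \<omega> = b \<and> W \<omega> = w)
              = cPr M (\<lambda>\<omega>. A \<omega> = a) (\<lambda>\<omega>. W \<omega> = w) * Pr M (\<lambda>\<omega>. B \<omega> = b \<and> W \<omega> = w))"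
proof -
  have "Pr M (\<lambda>\<omega>. A \<omega> = a \<and> B \<omega> = b \<and> W \<omega> = w) * Pr M (\<lambda>\<omega>. W \<omega> = w)
          = Pr M (\<lambda>\<omega>. A \<omega> = a \<and> W \<omega> = w) * Pr M (\<lambda>\<omega>. B \<omega> = b \<and> W \<omega> = w)
        \<longleftrightarrow> Pr M (\<lambda>\<omega>. A \<omega> = a \<and> B \<omega> = b \<and> W \<omega> = w)
          = cPr M (\<lambda>\<omega>. A \<omega> = a) (\<lambda>\<omega>. W \<omega> = w) * Pr M (\<lambda>\<omega>. B \<omega> = b \<and> W \<omega> = w)"
    for a b w
  proof (cases "Pr M (\<lambda>\<omega>. W \<omega> = w) = 0")
    case True
    moreover have "Pr M (\<lambda>\<omega>. A \<omega> = a \<and> B \<omega> = b \<and> W \<omega> = w) = 0"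
      and "Pr M (\<lambda>\<omega>. B \<omega> = b \<and> W \<omega> = w) = 0"
      using True by (auto elim: Pr_null_mono)
    ultimately show ?thesis
      by simp
  next
    case False
    then show ?thesis
      unfolding cPr_def by (auto simp: field_simps)
  qed
  then show ?thesis
    unfolding cond_indep_def by simp
qed

lemma cond_indep_comp:
  assumes "cond_indep M A B W"
  shows "cond_indep M A (\<lambda>\<omega>. f (B \<omega>)) W"
  unfolding cond_indep_iff_factor
proof (intro allI)
  fix a u w
  let ?q = "cPr M (\<lambda>\<omega>. A \<omega> = a) (\<lambda>\<omega>. W \<omega> = w)"
  show "Pr M (\<lambda>\<omega>. A \<omega> = a \<and> f (B \<omega>) = u \<and> W \<omega> = w) = ?q * Pr M (\<lambda>\<omega>. f (B \<omega>) = u \<and> W \<omega> = w)"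
  proof (rule Pr_scale_by_partition[where f = B])
    fix b
    show "Pr M (\<lambda>\<omega>. (A \<omega> = a \<and> f (B \<omega>) = u \<and> W \<omega> = w) \<and> B \<omega> = b)
          = ?q * Pr M (\<lambda>\<omega>. (f (B \<omega>) = u \<and> W \<omega> = w) \<and> B \<omega> = b)"
    proof (cases "f b = u")
      case True
      have "Pr M (\<lambda>\<omega>. (A \<omega> = a \<and> f (B \<omega>) = u \<and> W \<omega> = w) \<and> B \<omega> = b)
              = Pr M (\<lambda>\<omega>. A \<omega> = a \<and> B \<omega> = b \<and> W \<omega> = w)"
        using True by (intro Pr_cong) auto
      moreover have "Pr M (\<lambda>\<omega>. (f (B \<omega>) = u \<and> W \<omega> = w) \<and> B \<omega> = b)
                     = Pr M (\<lambda>\<omega>. B \<omega> = b \<and> W \<omega> = w)"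
        using True by (intro Pr_cong) auto
      ultimately show ?thesis
        using assms by (simp add: cond_indep_iff_factor)
    next
      case False
      then have "Pr M (\<lambda>\<omega>. (A \<omega> = a \<and> f (B \<omega>) = u \<and> W \<omega> = w) \<and> B \<omega> = b) = 0"
        and "Pr M (\<lambda>\<omega>. (f (B \<omega>) = u \<and> W \<omega> = w) \<and> B \<omega> = b) = 0"
        by (auto intro!: Pr_eq_0)
      then show ?thesis
        by simp
    qed
  qed
qed

lemma cond_indep_cond_pmf:
  assumes "cond_indep M A B (\<lambda>\<omega>. (W \<omega>, C \<omega>))" and "Pr M (\<lambda>\<omega>. C \<omega> = c) > 0"
  shows "cond_indep (cond_pmf M {\<omega>. C \<omega> = c}) A B W"
  unfolding cond_indep_def
proof (intro allI)
  fix a b w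
  have "Pr M (\<lambda>\<omega>. A \<omega> = a \<and> B \<omega> = b \<and> (W \<omega>, C \<omega>) = (w, c)) * Pr M (\<lambda>\<omega>. (W \<omega>, C \<omega>) = (w, c))
      = Pr M (\<lambda>\<omega>. A \<omega> = a \<and> (W \<omega>, C \<omega>) = (w, c)) * Pr M (\<lambda>\<omega>. B \<omega> = b \<and> (W \<omega>, C \<omega>) = (w, c))"
    using assms(1) unfolding cond_indep_def by blast
  then show "Pr (cond_pmf M {\<omega>. C \<omega> = c}) (\<lambda>\<omega>. A \<omega> = a \<and> B \<omega> = b \<and> W \<omega> = w)
               * Pr (cond_pmf M {\<omega>. C \<omega> = c}) (\<lambda>\<omega>. W \<omega> = w)
           = Pr (cond_pmf M {\<omega>. C \<omega> = c}) (\<lambda>\<omega>. A \<omega> = a \<and> W \<omega> = w)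
               * Pr (cond_pmf M {\<omega>. C \<omega> = c}) (\<lambda>\<omega>. B \<omega> = b \<and> W \<omega> = w)"
    using assms(2) by (simp add: Pr_cond_pmf cPr_def conj_assoc)
qed

lemma cPr_counterfactual_eq_observational:
  assumes consistency: "\<And>\<omega>. X \<omega> = a \<Longrightarrow> Yx a \<omega> = Y \<omega> \<and> Zx a \<omega> = Z \<omega>"
    and indep: "cond_indep M (Yx a) X (Zx a)"
    and pos: "Pr M (\<lambda>\<omega>. Z \<omega> = z \<and> X \<omega> = a) > 0"
  shows "cPr M (\<lambda>\<omega>. Yx a \<omega> = v) (\<lambda>\<omega>. Zx a \<omega> = z)
       = cPr M (\<lambda>\<omega>. Y \<omega> = v) (\<lambda>\<omega>. Z \<omega> = z \<and> X \<omega> = a)"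
proof -
  have "Pr M (\<lambda>\<omega>. Yx a \<omega> = v \<and> X \<omega> = a \<and> Zx a \<omega> = z)
        = cPr M (\<lambda>\<omega>. Yx a \<omega> = v) (\<lambda>\<omega>. Zx a \<omega> = z) * Pr M (\<lambda>\<omega>. X \<omega> = a \<and> Zx a \<omega> = z)"
    using indep by (simp add: cond_indep_iff_factor)
  moreover have "Pr M (\<lambda>\<omega>. Yx a \<omega> = v \<and> X \<omega> = a \<and> Zx a \<omega> = z)
                 = Pr M (\<lambda>\<omega>. Y \<omega> = v \<and> Z \<omega> = z \<and> X \<omega> = a)"
    and "Pr M (\<lambda>\<omega>. X \<omega> = a \<and> Zx a \<omega> = z) = Pr M (\<lambda>\<omega>. Z \<omega> = z \<and> X \<omega> = a)"
    using consistency by (auto intro!: Pr_cong)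
  ultimately show ?thesis
    using pos by (simp add: cPr_def[of M "\<lambda>\<omega>. Y \<omega> = v"])
qed

lemma Pr_counterfactual_factor:
  assumes consistency: "\<And>\<omega>. X \<omega> = a \<Longrightarrow> Yx a \<omega> = Y \<omega> \<and> Zx a \<omega> = Z \<omega>"
    and indep: "cond_indep M (Yx a) (\<lambda>\<omega>. (X \<omega>, V \<omega>)) (Zx a)"
    and defined: "Pr M (\<lambda>\<omega>. Zx a \<omega> = z) > 0 \<Longrightarrow> Pr M (\<lambda>\<omega>. Z \<omega> = z \<and> X \<omega> = a) > 0"
  shows "Pr M (\<lambda>\<omega>. Yx a \<omega> = v \<and> V \<omega> = z' \<and> Zx a \<omega> = z)
       = cPr M (\<lambda>\<omega>. Y \<omega> = v) (\<lambda>\<omega>. Z \<omega> = z \<and> X \<omega> = a) * Pr M (\<lambda>\<omega>. V \<omega> = z' \<and> Zx a \<omega> = z)"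
proof -
  have "cond_indep M (Yx a) V (Zx a)"
    using cond_indep_comp[OF indep, of snd] by simp
  then have "Pr M (\<lambda>\<omega>. Yx a \<omega> = v \<and> V \<omega> = z' \<and> Zx a \<omega> = z)
       = cPr M (\<lambda>\<omega>. Yx a \<omega> = v) (\<lambda>\<omega>. Zx a \<omega> = z) * Pr M (\<lambda>\<omega>. V \<omega> = z' \<and> Zx a \<omega> = z)"
    by (simp add: cond_indep_iff_factor)
  also have "\<dots> = cPr M (\<lambda>\<omega>. Y \<omega> = v) (\<lambda>\<omega>. Z \<omega> = z \<and> X \<omega> = a) * Pr M (\<lambda>\<omega>. V \<omega> = z' \<and> Zx a \<omega> = z)"
  proof (cases "Pr M (\<lambda>\<omega>. Zx a \<omega> = z) > 0")
    case True
    have "cond_indep M (Yx a) X (Zx a)"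
      using cond_indep_comp[OF indep, of fst] by simp
    then show ?thesis
      using cPr_counterfactual_eq_observational[of X a Yx Y Zx Z, OF consistency _ defined[OF True]]
      by simp
  next
    case False
    then have "Pr M (\<lambda>\<omega>. Zx a \<omega> = z) = 0"
      by (simp add: antisym Pr_nonneg not_less)
    then have "Pr M (\<lambda>\<omega>. V \<omega> = z' \<and> Zx a \<omega> = z) = 0"
      by (rule Pr_null_mono) auto
    then show ?thesis
      by simp
  qed
  finally show ?thesis .
qed

lemma outcome_eq_if_treatment:
  fixes X :: "'u \<Rightarrow> bool"
  assumes "\<And>\<omega> a. X \<omega> = a \<Longrightarrow> Yx a \<omega> = Y \<omega>" and "x \<noteq> x'"
  shows "Y \<omega> = (if X \<omega> = x then Yx x \<omega> else Yx x' \<omega>)"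
proof (cases "X \<omega> = x")
  case True
  then show ?thesis
    using assms(1)[of \<omega> x] by simp
next
  case False
  then have "X \<omega> = x'"
    using assms(2) by auto
  with False show ?thesis
    using assms(1)[of \<omega> x'] by simp
qed

lemma pns_lower_bound:
  fixes X Y :: "'u \<Rightarrow> bool" and Yx :: "bool \<Rightarrow> 'u \<Rightarrow> bool"
  assumes consistency: "\<And>\<omega> a. X \<omega> = a \<Longrightarrow> Yx a \<omega> = Y \<omega>" and "x \<noteq> x'" and "y \<noteq> y'"
  shows "max 0 (max (Pr M (\<lambda>\<omega>. Yx x \<omega> = y) - Pr M (\<lambda>\<omega>. Yx x' \<omega> = y))
                    (max (Pr M (\<lambda>\<omega>. Y \<omega> = y) - Pr M (\<lambda>\<omega>. Yx x' \<omega> = y))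
                         (Pr M (\<lambda>\<omega>. Yx x \<omega> = y) - Pr M (\<lambda>\<omega>. Y \<omega> = y))))
         \<le> Pr M (\<lambda>\<omega>. Yx x \<omega> = y \<and> Yx x' \<omega> = y')"
proof -
  note Y_eq = outcome_eq_if_treatment[where X = X and Yx = Yx and Y = Y, OF consistency \<open>x \<noteq> x'\<close>]
  have "Pr M (\<lambda>\<omega>. Yx x \<omega> = y) \<le> Pr M (\<lambda>\<omega>. Yx x \<omega> = y \<and> Yx x' \<omega> = y') + Pr M (\<lambda>\<omega>. Yx x' \<omega> = y)"
    by (rule Pr_subadditive) (use \<open>y \<noteq> y'\<close> in auto)
  moreover have "Pr M (\<lambda>\<omega>. Y \<omega> = y) \<le> Pr M (\<lambda>\<omega>. Yx x \<omega> = y \<and> Yx x' \<omega> = y') + Pr M (\<lambda>\<omega>. Yx x' \<omega> = y)"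
    by (rule Pr_subadditive) (use Y_eq \<open>x \<noteq> x'\<close> \<open>y \<noteq> y'\<close> in \<open>auto split: if_splits\<close>)
  moreover have "Pr M (\<lambda>\<omega>. Yx x \<omega> = y) \<le> Pr M (\<lambda>\<omega>. Yx x \<omega> = y \<and> Yx x' \<omega> = y') + Pr M (\<lambda>\<omega>. Y \<omega> = y)"
    by (rule Pr_subadditive) (use Y_eq \<open>x \<noteq> x'\<close> \<open>y \<noteq> y'\<close> in \<open>auto split: if_splits\<close>)
  ultimately show ?thesis
    by (simp add: Pr_nonneg)
qed

lemma pns_upper_bound:
  fixes X Y :: "'u \<Rightarrow> bool" and Yx :: "bool \<Rightarrow> 'u \<Rightarrow> bool"
  assumes consistency: "\<And>\<omega> a. X \<omega> = a \<Longrightarrow> Yx a \<omega> = Y \<omega>" and "x \<noteq> x'" and "y \<noteq> y'"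
  shows "Pr M (\<lambda>\<omega>. Yx x \<omega> = y \<and> Yx x' \<omega> = y')
         \<le> min (Pr M (\<lambda>\<omega>. Yx x \<omega> = y))
             (min (Pr M (\<lambda>\<omega>. Yx x' \<omega> = y'))
               (min (Pr M (\<lambda>\<omega>. Y \<omega> = y \<and> X \<omega> = x) + Pr M (\<lambda>\<omega>. Y \<omega> = y' \<and> X \<omega> = x'))
                    (Pr M (\<lambda>\<omega>. Yx x \<omega> = y) - Pr M (\<lambda>\<omega>. Yx x' \<omega> = y)
                     + Pr M (\<lambda>\<omega>. Y \<omega> = y \<and> X \<omega> = x') + Pr M (\<lambda>\<omega>. Y \<omega> = y' \<and> X \<omega> = x))))"
    (is "?pns \<le> _")
proof -
  note Y_eq = outcome_eq_if_treatment[where X = X and Yx = Yx and Y = Y, OF consistency \<open>x \<noteq> x'\<close>]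
  have "?pns \<le> Pr M (\<lambda>\<omega>. Yx x \<omega> = y)" and "?pns \<le> Pr M (\<lambda>\<omega>. Yx x' \<omega> = y')"
    by (auto intro: Pr_mono)
  moreover have "?pns \<le> Pr M (\<lambda>\<omega>. Y \<omega> = y \<and> X \<omega> = x) + Pr M (\<lambda>\<omega>. Y \<omega> = y' \<and> X \<omega> = x')"
    by (rule Pr_subadditive) (use Y_eq \<open>x \<noteq> x'\<close> \<open>y \<noteq> y'\<close> in \<open>auto split: if_splits\<close>)
  moreover
  txt \<open>P(y_x, y'_x') + P(y_x') = P(y_x) + P(y'_x, y_x'), and on the event (y'_x, y_x') the
    observed (X, Y) is (x', y) or (x, y').\<close>
  have "Pr M (\<lambda>\<omega>. Yx x \<omega> = y) = Pr M (\<lambda>\<omega>. Yx x \<omega> = y \<and> Yx x' \<omega> = y) + ?pns"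
    using Pr_split[of M "\<lambda>\<omega>. Yx x \<omega> = y" "\<lambda>\<omega>. Yx x' \<omega> = y"] \<open>y \<noteq> y'\<close>
    by (auto intro: Pr_cong)
  moreover have "Pr M (\<lambda>\<omega>. Yx x' \<omega> = y)
      = Pr M (\<lambda>\<omega>. Yx x \<omega> = y \<and> Yx x' \<omega> = y) + Pr M (\<lambda>\<omega>. Yx x' \<omega> = y \<and> Yx x \<omega> \<noteq> y)"
    using Pr_split[of M "\<lambda>\<omega>. Yx x' \<omega> = y" "\<lambda>\<omega>. Yx x \<omega> = y"]
    by (simp add: conj_commute)
  moreover have "Pr M (\<lambda>\<omega>. Yx x' \<omega> = y \<and> Yx x \<omega> \<noteq> y)
      \<le> Pr M (\<lambda>\<omega>. Y \<omega> = y \<and> X \<omega> = x') + Pr M (\<lambda>\<omega>. Y \<omega> = y' \<and> X \<omega> = x)"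
    by (rule Pr_subadditive) (use Y_eq \<open>x \<noteq> x'\<close> \<open>y \<noteq> y'\<close> in \<open>auto split: if_splits\<close>)
  ultimately show ?thesis
    by simp
qed

lemma Pr_pns_cell_le:
  assumes consistency: "\<And>\<omega> a. X \<omega> = a \<Longrightarrow> Yx a \<omega> = Y \<omega> \<and> Zx a \<omega> = Z \<omega>"
    and indep: "\<And>a b. a \<noteq> b \<Longrightarrow> cond_indep M (Yx a) (\<lambda>\<omega>. (X \<omega>, Zx b \<omega>)) (Zx a)"
    and "x \<noteq> x'"
    and defined_x: "\<And>z. Pr M (\<lambda>\<omega>. Zx x \<omega> = z) > 0 \<Longrightarrow> Pr M (\<lambda>\<omega>. Z \<omega> = z \<and> X \<omega> = x) > 0"
    and defined_x': "\<And>z'. Pr M (\<lambda>\<omega>. Zx x' \<omega> = z') > 0 \<Longrightarrow> Pr M (\<lambda>\<omega>. Z \<omega> = z' \<and> X \<omega> = x') > 0"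
  shows "Pr M (\<lambda>\<omega>. (Yx x \<omega> = y \<and> Yx x' \<omega> = y') \<and> (Zx x \<omega>, Zx x' \<omega>) = (z, z'))
       \<le> min (cPr M (\<lambda>\<omega>. Y \<omega> = y) (\<lambda>\<omega>. Z \<omega> = z \<and> X \<omega> = x))
              (cPr M (\<lambda>\<omega>. Y \<omega> = y') (\<lambda>\<omega>. Z \<omega> = z' \<and> X \<omega> = x'))
           * min (Pr M (\<lambda>\<omega>. Zx x \<omega> = z)) (Pr M (\<lambda>\<omega>. Zx x' \<omega> = z'))"
    (is "?cell \<le> min ?r ?r' * min ?p ?p'")
proof -
  define J where "J = Pr M (\<lambda>\<omega>. Zx x' \<omega> = z' \<and> Zx x \<omega> = z)"
  have "?cell \<le> Pr M (\<lambda>\<omega>. Yx x \<omega> = y \<and> Zx x' \<omega> = z' \<and> Zx x \<omega> = z)"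
    by (rule Pr_mono) auto
  also have "\<dots> = ?r * J"
    unfolding J_def
    by (rule Pr_counterfactual_factor[of X x Yx Y Zx Z, OF consistency indep[OF \<open>x \<noteq> x'\<close>] defined_x])
  finally have "?cell \<le> ?r * J" .
  moreover have "?cell \<le> Pr M (\<lambda>\<omega>. Yx x' \<omega> = y' \<and> Zx x \<omega> = z \<and> Zx x' \<omega> = z')"
    by (rule Pr_mono) auto
  moreover have "\<dots> = ?r' * Pr M (\<lambda>\<omega>. Zx x \<omega> = z \<and> Zx x' \<omega> = z')"
    using \<open>x \<noteq> x'\<close>
    by (intro Pr_counterfactual_factor[of X x' Yx Y Zx Z, OF consistency indep defined_x']) auto
  moreover have "Pr M (\<lambda>\<omega>. Zx x \<omega> = z \<and> Zx x' \<omega> = z') = J"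
    unfolding J_def by (rule Pr_cong) auto
  ultimately have "?cell \<le> min ?r ?r' * J"
    by (simp add: min_def)
  also have "\<dots> \<le> min ?r ?r' * min ?p ?p'"
    unfolding J_def by (intro mult_left_mono min.boundedI Pr_mono) (auto simp: cPr_nonneg)
  finally show ?thesis .
qed

lemma pns_upper_bound_mediator:
  assumes consistency: "\<And>\<omega> a. X \<omega> = a \<Longrightarrow> Yx a \<omega> = Y \<omega> \<and> Zx a \<omega> = Z \<omega>"
    and indep: "\<And>a b. a \<noteq> b \<Longrightarrow> cond_indep M (Yx a) (\<lambda>\<omega>. (X \<omega>, Zx b \<omega>)) (Zx a)"
    and "x \<noteq> x'"
    and defined_x: "\<And>z. Pr M (\<lambda>\<omega>. Zx x \<omega> = z) > 0 \<Longrightarrow> Pr M (\<lambda>\<omega>. Z \<omega> = z \<and> X \<omega> = x) > 0"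
    and defined_x': "\<And>z'. Pr M (\<lambda>\<omega>. Zx x' \<omega> = z') > 0 \<Longrightarrow> Pr M (\<lambda>\<omega>. Z \<omega> = z' \<and> X \<omega> = x') > 0"
  shows "ennreal (Pr M (\<lambda>\<omega>. Yx x \<omega> = y \<and> Yx x' \<omega> = y'))
       \<le> (\<Sum>\<^sub>\<infinity>(z, z') \<in> UNIV.
            ennreal (min (cPr M (\<lambda>\<omega>. Y \<omega> = y) (\<lambda>\<omega>. Z \<omega> = z \<and> X \<omega> = x))
                         (cPr M (\<lambda>\<omega>. Y \<omega> = y') (\<lambda>\<omega>. Z \<omega> = z' \<and> X \<omega> = x'))
                   * min (Pr M (\<lambda>\<omega>. Zx x \<omega> = z)) (Pr M (\<lambda>\<omega>. Zx x' \<omega> = z'))))"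
    (is "_ \<le> ?bound")
proof -
  have "ennreal (Pr M (\<lambda>\<omega>. Yx x \<omega> = y \<and> Yx x' \<omega> = y'))
      = (\<Sum>\<^sub>\<infinity>zz'. ennreal (Pr M (\<lambda>\<omega>. (Yx x \<omega> = y \<and> Yx x' \<omega> = y') \<and> (Zx x \<omega>, Zx x' \<omega>) = zz')))"
    by (rule ennreal_Pr_eq_infsum_partition)
  also have "\<dots> \<le> ?bound"
    using Pr_pns_cell_le[where X = X and Yx = Yx and Zx = Zx,
        OF consistency indep \<open>x \<noteq> x'\<close> defined_x defined_x']
    by (intro infsum_mono nonneg_summable_on_complete) (auto intro: ennreal_leI)
  finally show ?thesis .
qed

theorem lemma5:
  fixes M :: "'u pmf"
    and X :: "'u \<Rightarrow> bool" and Y :: "'u \<Rightarrow> bool"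
    and Z :: "'u \<Rightarrow> 'z" and C :: "'u \<Rightarrow> 'c"
    and Yx :: "bool \<Rightarrow> 'u \<Rightarrow> bool" and Zx :: "bool \<Rightarrow> 'u \<Rightarrow> 'z"
    and x x' y y' :: bool and c :: 'c
  assumes consistency: "\<And>\<omega> a. X \<omega> = a \<Longrightarrow> Yx a \<omega> = Y \<omega> \<and> Zx a \<omega> = Z \<omega>"
    and indep: "\<And>a b. a \<noteq> b \<Longrightarrow>
                  cond_indep M (Yx a) (\<lambda>\<omega>. (X \<omega>, Zx b \<omega>)) (\<lambda>\<omega>. (Zx a \<omega>, C \<omega>))"
    and xx': "x \<noteq> x'" and yy': "y \<noteq> y'"
    and Pc: "Pr M (\<lambda>\<omega>. C \<omega> = c) > 0"
    and defined_x: "\<And>z. Pr M (\<lambda>\<omega>. Zx x \<omega> = z \<and> C \<omega> = c) > 0 \<Longrightarrow>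
                          Pr M (\<lambda>\<omega>. Z \<omega> = z \<and> X \<omega> = x \<and> C \<omega> = c) > 0"
    and defined_x': "\<And>z'. Pr M (\<lambda>\<omega>. Zx x' \<omega> = z' \<and> C \<omega> = c) > 0 \<Longrightarrow>
                          Pr M (\<lambda>\<omega>. Z \<omega> = z' \<and> X \<omega> = x' \<and> C \<omega> = c) > 0"
  shows
   "max 0 (max (cPr M (\<lambda>\<omega>. Yx x \<omega> = y) (\<lambda>\<omega>. C \<omega> = c) - cPr M (\<lambda>\<omega>. Yx x' \<omega> = y) (\<lambda>\<omega>. C \<omega> = c))
          (max (cPr M (\<lambda>\<omega>. Y \<omega> = y) (\<lambda>\<omega>. C \<omega> = c) - cPr M (\<lambda>\<omega>. Yx x' \<omega> = y) (\<lambda>\<omega>. C \<omega> = c))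
               (cPr M (\<lambda>\<omega>. Yx x \<omega> = y) (\<lambda>\<omega>. C \<omega> = c) - cPr M (\<lambda>\<omega>. Y \<omega> = y) (\<lambda>\<omega>. C \<omega> = c))))
      \<le> cPr M (\<lambda>\<omega>. Yx x \<omega> = y \<and> Yx x' \<omega> = y') (\<lambda>\<omega>. C \<omega> = c)
    \<and> cPr M (\<lambda>\<omega>. Yx x \<omega> = y \<and> Yx x' \<omega> = y') (\<lambda>\<omega>. C \<omega> = c)
      \<le> min (cPr M (\<lambda>\<omega>. Yx x \<omega> = y) (\<lambda>\<omega>. C \<omega> = c))
          (min (cPr M (\<lambda>\<omega>. Yx x' \<omega> = y') (\<lambda>\<omega>. C \<omega> = c))
            (min (cPr M (\<lambda>\<omega>. Y \<omega> = y \<and> X \<omega> = x) (\<lambda>\<omega>. C \<omega> = c)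
                  + cPr M (\<lambda>\<omega>. Y \<omega> = y' \<and> X \<omega> = x') (\<lambda>\<omega>. C \<omega> = c))
                 (cPr M (\<lambda>\<omega>. Yx x \<omega> = y) (\<lambda>\<omega>. C \<omega> = c) - cPr M (\<lambda>\<omega>. Yx x' \<omega> = y) (\<lambda>\<omega>. C \<omega> = c)
                  + cPr M (\<lambda>\<omega>. Y \<omega> = y \<and> X \<omega> = x') (\<lambda>\<omega>. C \<omega> = c)
                  + cPr M (\<lambda>\<omega>. Y \<omega> = y' \<and> X \<omega> = x) (\<lambda>\<omega>. C \<omega> = c))))
    \<and> ennreal (cPr M (\<lambda>\<omega>. Yx x \<omega> = y \<and> Yx x' \<omega> = y') (\<lambda>\<omega>. C \<omega> = c))
      \<le> (\<Sum>\<^sub>\<infinity>(z, z') \<in> UNIV.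
            ennreal (min (cPr M (\<lambda>\<omega>. Y \<omega> = y) (\<lambda>\<omega>. Z \<omega> = z \<and> X \<omega> = x \<and> C \<omega> = c))
                         (cPr M (\<lambda>\<omega>. Y \<omega> = y') (\<lambda>\<omega>. Z \<omega> = z' \<and> X \<omega> = x' \<and> C \<omega> = c))
                   * min (cPr M (\<lambda>\<omega>. Zx x \<omega> = z) (\<lambda>\<omega>. C \<omega> = c))
                         (cPr M (\<lambda>\<omega>. Zx x' \<omega> = z') (\<lambda>\<omega>. C \<omega> = c))))"
proof -
  define Mc where "Mc = cond_pmf M {\<omega>. C \<omega> = c}"
  have cPr_C: "cPr M A (\<lambda>\<omega>. C \<omega> = c) = Pr Mc A" for A
    unfolding Mc_def using Pc by (simp add: Pr_cond_pmf)
  have cPr_ZXC: "cPr M A (\<lambda>\<omega>. Z \<omega> = z \<and> X \<omega> = a \<and> C \<omega> = c)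
                 = cPr Mc A (\<lambda>\<omega>. Z \<omega> = z \<and> X \<omega> = a)" for A z a
    unfolding Mc_def using cPr_cond_pmf[OF Pc, of A "\<lambda>\<omega>. Z \<omega> = z \<and> X \<omega> = a"] by simp
  have Pr_Mc_pos: "Pr Mc A > 0 \<longleftrightarrow> Pr M (\<lambda>\<omega>. A \<omega> \<and> C \<omega> = c) > 0" for A
    using Pc by (simp add: cPr_C[symmetric] cPr_def zero_less_divide_iff)
  have indep_Mc: "cond_indep Mc (Yx a) (\<lambda>\<omega>. (X \<omega>, Zx b \<omega>)) (Zx a)" if "a \<noteq> b" for a b
    unfolding Mc_def using cond_indep_cond_pmf[OF indep[OF that] Pc] .
  have defined_Mc: "Pr Mc (\<lambda>\<omega>. Zx x \<omega> = z) > 0 \<Longrightarrow> Pr Mc (\<lambda>\<omega>. Z \<omega> = z \<and> X \<omega> = x) > 0"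
    and defined_Mc': "Pr Mc (\<lambda>\<omega>. Zx x' \<omega> = z) > 0 \<Longrightarrow> Pr Mc (\<lambda>\<omega>. Z \<omega> = z \<and> X \<omega> = x') > 0" for z
    using defined_x defined_x' by (simp_all add: Pr_Mc_pos conj_assoc)
  have consistency_Y: "\<And>\<omega> a. X \<omega> = a \<Longrightarrow> Yx a \<omega> = Y \<omega>"
    using consistency by blast
  show ?thesis
    unfolding cPr_C cPr_ZXC
    using pns_lower_bound[where X = X and Yx = Yx and Y = Y, OF consistency_Y xx' yy']
      pns_upper_bound[where X = X and Yx = Yx and Y = Y, OF consistency_Y xx' yy']
      pns_upper_bound_mediator[where X = X and Yx = Yx and Zx = Zx,
        OF consistency indep_Mc xx' defined_Mc defined_Mc']
    by blast
qed

end
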